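(* Every point of the interval $[m,M]$ is an accumulation point of $(b_n)_{n\ge1}$, where $m=\inf\{b_n:n\ge1\}$ and $M=\sup\{b_n:n\ge1\}$. In particular $(b_n)_{n\ge1}$ is dense in $[m,M]$ and its set of accumulation points is exactly $[m,M]$.
   Context: Fix integers $p\ge 3$ and $2\le s<p$, and a set $A\subset\{0,1,\dots,p-1\}$ with $\#A=s$. Let $h:\{0,1,\dots,s-1\}\to A$ be the unique strictly increasing bijection. For a positive integer $n$ with base-$s$ expansion $n=\sum_{i=0}^k\varepsilon_i s^i$ ($\varepsilon_i\in\{0,\dots,s-1\}$, $\varepsilon_k\ne 0$), put $a_n=\sum_{i=0}^k h(\varepsilon_i)p^i$. Let $b_n=a_n/n^{\log_s p}$ for $n\ge1$. An accumulation point of $(b_n)$ is a limit of $b_{n_k}$ along a strictly increasing sequence of indices $(n_k)$. *)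

theory Defs
  imports "HOL-Analysis.Analysis"
begin

definition digit :: "nat \<Rightarrow> nat \<Rightarrow> nat \<Rightarrow> nat" where
  "digit s n i = (n div s ^ i) mod s"

text \<open>a_n = sum over i = 0..k of h(eps_i) p^i, where k is the index of the leading
  base-s digit, i.e. the indices i range over those with s^i \<le> n.\<close>
definition aseq :: "nat \<Rightarrow> nat \<Rightarrow> (nat \<Rightarrow> nat) \<Rightarrow> nat \<Rightarrow> nat" where
  "aseq p s h n = (\<Sum>i\<in>{i. s ^ i \<le> n}. h (digit s n i) * p ^ i)"

definition bseq :: "nat \<Rightarrow> nat \<Rightarrow> (nat \<Rightarrow> nat) \<Rightarrow> nat \<Rightarrow> real" where
  "bseq p s h n = real (aseq p s h n) / real n powr (log (real s) (real p))"

definition acc_point :: "(nat \<Rightarrow> real) \<Rightarrow> real \<Rightarrow> bool" where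
  "acc_point b x \<longleftrightarrow> (\<exists>r. strict_mono r \<and> (\<forall>k. 1 \<le> r k) \<and> (\<lambda>k. b (r k)) \<longlonglongrightarrow> x)"

end

theory Submission
  imports Defs
begin

text \<open>
  Write \<open>\<alpha> = log s p\<close>. Appending a digit multiplies \<open>a\<^sub>n\<close> by about \<open>p\<close> and \<open>n\<close> by about
  \<open>s = p powr (1/\<alpha>)\<close>, so \<open>b\<^sub>n\<close> does not decrease along \<open>n, s n, s\<^sup>2 n, \<dots>\<close>, while along
  \<open>q s\<^sup>j - 1\<close> (the expansion of \<open>q - 1\<close> followed by \<open>j\<close> copies of the largest digit) its
  values are eventually below any level above \<open>b\<^sub>q\<close>. Hence every
  value strictly between \<open>m\<close> and \<open>M\<close> is crossed at arbitrarily large indices. Since \<open>a\<close> is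
  increasing, \<open>b\<^sub>n\<^sub>+\<^sub>1 \<ge> b\<^sub>n (n/(n+1))\<^sup>\<alpha>\<close>, so the downward jumps of \<open>b\<close> tend to \<open>0\<close>, and at
  each downward crossing of a level \<open>y\<close> the sequence lands close to \<open>y\<close>. The endpoints
  \<open>m\<close>, \<open>M\<close> follow by closedness.
\<close>

section \<open>Accumulation points of real sequences\<close>

lemma down_crossing:
  fixes f :: "nat \<Rightarrow> 'a::linorder"
  assumes "u \<le> v" and "y \<le> f u" and "f v < y"
  shows "\<exists>t. u \<le> t \<and> t < v \<and> y \<le> f t \<and> f (Suc t) < y"
  using assms
proof (induction v)
  case 0
  then show ?case by (simp add: leD)
next
  case (Suc v)
  show ?case
  proof (cases "u \<le> v \<and> y \<le> f v")
    case True
    with Suc.prems show ?thesis by (intro exI[of _ v]) auto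
  next
    case False
    with Suc.prems have "u \<le> v" "f v < y"
      by (auto simp: le_Suc_eq not_le)
    with Suc.prems Suc.IH show ?thesis using less_SucI by blast
  qed
qed

lemma frequently_dist_less_of_crossings:
  fixes f :: "nat \<Rightarrow> real"
  assumes jumps: "\<forall>\<^sub>F n in sequentially. f n - f (Suc n) < \<epsilon>"
    and above: "\<exists>\<^sub>F n in sequentially. y \<le> f n"
    and below: "\<exists>\<^sub>F n in sequentially. f n < y"
  shows "\<exists>\<^sub>F n in sequentially. dist (f n) y < \<epsilon>"
  unfolding frequently_sequentially
proof
  fix N
  obtain N0 where N0: "\<And>n. N0 \<le> n \<Longrightarrow> f n - f (Suc n) < \<epsilon>"
    using jumps by (auto simp: eventually_sequentially)
  obtain u where u: "max N N0 \<le> u" "y \<le> f u"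
    using above unfolding frequently_sequentially by blast
  obtain v where v: "u \<le> v" "f v < y"
    using below by (auto simp: frequently_sequentially)
  obtain t where t: "u \<le> t" "y \<le> f t" "f (Suc t) < y"
    using down_crossing[OF v(1) u(2) v(2)] by blast
  have "f t - f (Suc t) < \<epsilon>" using N0 t(1) u(1) by simp
  with t u(1) show "\<exists>n\<ge>N. dist (f n) y < \<epsilon>"
    by (intro exI[of _ "Suc t"]) (auto simp: dist_real_def)
qed

lemma frequently_dist_less_closure:
  fixes f :: "'b \<Rightarrow> 'a::metric_space"
  assumes near: "\<And>z \<epsilon>. z \<in> S \<Longrightarrow> 0 < \<epsilon> \<Longrightarrow> \<exists>\<^sub>F n in F. dist (f n) z < \<epsilon>"
    and "y \<in> closure S" and "0 < \<epsilon>"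
  shows "\<exists>\<^sub>F n in F. dist (f n) y < \<epsilon>"
proof -
  obtain z where z: "z \<in> S" "dist z y < \<epsilon> / 2"
    using assms(2,3) by (meson closure_approachable half_gt_zero)
  have "\<exists>\<^sub>F n in F. dist (f n) z < \<epsilon> / 2" using near[OF z(1)] assms(3) half_gt_zero by blast
  then show ?thesis
  proof (rule frequently_elim1)
    fix n assume "dist (f n) z < \<epsilon> / 2"
    with z(2) dist_triangle[of "f n" y z] show "dist (f n) y < \<epsilon>" by linarith
  qed
qed

lemma frequently_dist_less_imp_convergent_subseq:
  fixes f :: "nat \<Rightarrow> 'a::metric_space"
  assumes near: "\<And>\<epsilon>. 0 < \<epsilon> \<Longrightarrow> \<exists>\<^sub>F n in sequentially. dist (f n) l < \<epsilon>"
  shows "\<exists>r. strict_mono r \<and> (f \<circ> r) \<longlonglongrightarrow> l"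
proof -
  have after: "\<exists>n'. n < n' \<and> dist (f n') l < inverse (Suc k)" for n k
  proof -
    have "\<exists>\<^sub>F n' in sequentially. dist (f n') l < inverse (Suc k)"
      by (rule near) simp
    then obtain n' where "Suc n \<le> n'" "dist (f n') l < inverse (Suc k)"
      unfolding frequently_sequentially by blast
    then show ?thesis by (intro exI[of _ n']) simp
  qed
  have "\<exists>r. \<forall>k. dist (f (r k)) l < inverse (Suc k) \<and> r k < r (Suc k)"
    by (rule dependent_nat_choice) (use after in blast)+
  then obtain r where r: "\<And>k. dist (f (r k)) l < inverse (Suc k)" "\<And>k. r k < r (Suc k)"
    by blast
  have dist_lim: "(\<lambda>k. dist (f (r k)) l) \<longlonglongrightarrow> 0"
  proof (rule Lim_null_comparison[OF _ LIMSEQ_inverse_real_of_nat])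
    show "\<forall>\<^sub>F k in sequentially. norm (dist (f (r k)) l) \<le> inverse (real (Suc k))"
      using r(1) by (simp add: less_imp_le)
  qed
  have "strict_mono r" using r(2) by (simp add: strict_mono_Suc_iff)
  moreover have "(f \<circ> r) \<longlonglongrightarrow> l"
    using dist_lim by (simp add: tendsto_dist_iff[of "f \<circ> r"])
  ultimately show ?thesis by blast
qed

lemma acc_pointI:
  assumes "\<And>\<epsilon>. 0 < \<epsilon> \<Longrightarrow> \<exists>\<^sub>F n in sequentially. dist (f n) y < \<epsilon>"
  shows "acc_point f y"
proof -
  obtain r where r: "strict_mono r" "(f \<circ> r) \<longlonglongrightarrow> y"
    using frequently_dist_less_imp_convergent_subseq assms by blast
  \<comment> \<open>\<open>acc_point\<close> only admits indices \<open>\<ge> 1\<close>, so drop \<open>r 0\<close>\<close>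
  have "strict_mono (r \<circ> Suc)" using r(1) by (simp add: strict_mono_def)
  moreover have "1 \<le> r (Suc k)" for k using seq_suble[OF r(1), of "Suc k"] by simp
  moreover have "(\<lambda>k. f (r (Suc k))) \<longlonglongrightarrow> y" using LIMSEQ_Suc[OF r(2)] by (simp add: comp_def)
  ultimately show ?thesis unfolding acc_point_def by (intro exI[of _ "r \<circ> Suc"]) auto
qed

lemma acc_point_between:
  assumes "acc_point f x" and "\<And>n. 1 \<le> n \<Longrightarrow> lo \<le> f n \<and> f n \<le> hi"
  shows "lo \<le> x \<and> x \<le> hi"
proof -
  obtain r where "\<And>k. 1 \<le> r k" "(\<lambda>k. f (r k)) \<longlonglongrightarrow> x"
    using assms(1) unfolding acc_point_def by blast
  with assms(2) show ?thesis by (meson LIMSEQ_le_const LIMSEQ_le_const2)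
qed

lemma frequently_of_filterlim:
  assumes "filterlim g at_top sequentially" and "\<forall>\<^sub>F j in sequentially. P (g j)"
  shows "\<exists>\<^sub>F n in sequentially. P (n::nat)"
  unfolding frequently_sequentially
proof
  fix N
  have "\<forall>\<^sub>F j in sequentially. P (g j) \<and> N \<le> g j"
    using assms by (auto simp: filterlim_at_top intro: eventually_conj)
  then obtain j where "P (g j)" "N \<le> g j" by (auto simp: eventually_sequentially)
  then show "\<exists>n\<ge>N. P n" by blast
qed

section \<open>Digit expansions\<close>

lemma digit_mult_add_0: "j < s \<Longrightarrow> digit s (s * n + j) 0 = j"
  by (simp add: digit_def)

lemma digit_mult_add_Suc: "j < s \<Longrightarrow> digit s (s * n + j) (Suc i) = digit s n i"
  by (simp add: digit_def div_mult2_eq)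

lemma less_pow_self:
  fixes s :: nat
  assumes "2 \<le> s"
  shows "i < s ^ i"
  by (rule less_le_trans[OF less_exp power_mono]) (use assms in auto)

lemma finite_digit_positions:
  fixes s n :: nat
  assumes "2 \<le> s"
  shows "finite {i. s ^ i \<le> n}"
proof (rule finite_subset[of _ "{..n}"])
  from less_pow_self[OF assms] show "{i. s ^ i \<le> n} \<subseteq> {..n}" by (auto intro: less_imp_le less_le_trans)
qed simp

lemma digit_positions_mult_add:
  fixes s n j :: nat
  assumes "j < s" and "0 < s * n + j"
  shows "{i. s ^ i \<le> s * n + j} = insert 0 (Suc ` {i. s ^ i \<le> n})"
proof (intro set_eqI iffI)
  fix i assume i: "i \<in> {i. s ^ i \<le> s * n + j}"
  show "i \<in> insert 0 (Suc ` {i. s ^ i \<le> n})"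
  proof (cases i)
    case (Suc k)
    have "s ^ k \<le> n"
    proof (rule ccontr)
      assume "\<not> s ^ k \<le> n"
      then have "n + 1 \<le> s ^ k" by linarith
      then have "s * (n + 1) \<le> s * s ^ k" by (rule mult_le_mono2)
      with i Suc assms(1) show False by simp
    qed
    with Suc show ?thesis by blast
  qed simp
next
  fix i assume "i \<in> insert 0 (Suc ` {i. s ^ i \<le> n})"
  with assms(2) show "i \<in> {i. s ^ i \<le> s * n + j}"
    by (auto simp: Suc_le_eq trans_le_add1)
qed

section \<open>The sequences \<open>a\<close> and \<open>b\<close>\<close>

locale digit_substitution =
  fixes p s :: nat and h :: "nat \<Rightarrow> nat"
  assumes two_le_s: "2 \<le> s" and s_less_p: "s < p"
    and h_less_p: "\<And>j. j < s \<Longrightarrow> h j < p"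
    and h_strict_mono: "strict_mono_on {0..<s} h"
begin

abbreviation "a \<equiv> aseq p s h"
abbreviation "b \<equiv> bseq p s h"
abbreviation "\<alpha> \<equiv> log (real s) (real p)"

lemma aseq_0 [simp]: "a 0 = 0"
  using two_le_s by (simp add: aseq_def)

lemma aseq_mult_add:
  assumes j: "j < s" and pos: "0 < s * n + j"
  shows "a (s * n + j) = p * a n + h j"
proof -
  have "a (s * n + j) = (\<Sum>i\<in>insert 0 (Suc ` {i. s ^ i \<le> n}). h (digit s (s * n + j) i) * p ^ i)"
    unfolding aseq_def digit_positions_mult_add[OF j pos] ..
  also have "\<dots> = h j + (\<Sum>i\<in>{i. s ^ i \<le> n}. h (digit s n i) * p ^ Suc i)"
    using finite_digit_positions[OF two_le_s] j
    by (simp add: sum.reindex digit_mult_add_0 digit_mult_add_Suc)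
  also have "\<dots> = p * a n + h j"
    by (simp add: aseq_def sum_distrib_left algebra_simps)
  finally show ?thesis .
qed

lemma aseq_mult_add_le: "j < s \<Longrightarrow> a (s * n + j) \<le> p * a n + h j"
  by (cases "s * n + j = 0") (simp_all add: aseq_mult_add)

lemma aseq_Suc_gt: "a n < a (Suc n)"
proof (induction n rule: less_induct)
  case (less n)
  define q j where "q = n div s" and "j = n mod s"
  have n: "n = s * q + j" and j: "j < s"
    using two_le_s by (simp_all add: q_def j_def)
  show ?case
  proof (cases "Suc j < s")
    case True
    have "h j < h (Suc j)"
      using h_strict_mono True by (simp add: strict_mono_on_def)
    with aseq_mult_add_le[OF j, of q] aseq_mult_add[OF True, of q] n show ?thesis by simp
  next
    case False
    with j have j_max: "j = s - 1" by simp
    with n two_le_s have Suc_n: "Suc n = s * Suc q + 0" by simp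
    have "q \<le> s * q" using two_le_s by simp
    with n j_max two_le_s have "q < n" by linarith
    with less.IH have step: "p * (a q + 1) \<le> p * a (Suc q)"
      by (intro mult_le_mono2) (simp add: Suc_le_eq)
    have "a n \<le> p * a q + h j" using aseq_mult_add_le[OF j] n by simp
    also have "\<dots> < p * (a q + 1)" using h_less_p[OF j] by simp
    also have "\<dots> \<le> p * a (Suc q)" by (rule step)
    also have "\<dots> \<le> a (Suc n)" using aseq_mult_add[of 0 "Suc q"] two_le_s Suc_n by simp
    finally show ?thesis .
  qed
qed

lemma aseq_mult_ge: "p * a n \<le> a (s * n)"
  using aseq_mult_add[of 0 n] two_le_s by (cases "n = 0") simp_all

lemma aseq_mult_pow_ge: "p ^ j * a n \<le> a (n * s ^ j)"
proof (induction j)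
  case (Suc j)
  have "p ^ Suc j * a n \<le> p * a (n * s ^ j)" using Suc by simp
  also have "\<dots> \<le> a (n * s ^ Suc j)" using aseq_mult_ge[of "n * s ^ j"] by (simp add: ac_simps)
  finally show ?case .
qed simp

lemma aseq_pred_mult_pow_less:
  assumes "1 \<le> q"
  shows "a (q * s ^ j - 1) < p ^ j * a q"
proof (induction j)
  case 0
  show ?case using aseq_Suc_gt[of "q - 1"] assms by simp
next
  case (Suc j)
  have "1 \<le> q * s ^ j" using assms two_le_s by simp
  then have eq: "q * s ^ Suc j - 1 = s * (q * s ^ j - 1) + (s - 1)"
    using two_le_s by (simp add: algebra_simps diff_mult_distrib2)
  have "a (q * s ^ Suc j - 1) \<le> p * a (q * s ^ j - 1) + h (s - 1)"
    unfolding eq by (rule aseq_mult_add_le) (use two_le_s in simp)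
  also have "\<dots> < p * (a (q * s ^ j - 1) + 1)" using h_less_p two_le_s by simp
  also have "\<dots> \<le> p * (p ^ j * a q)" using Suc by (intro mult_le_mono2) simp
  finally show ?case by simp
qed

lemma alpha_pos: "0 < \<alpha>"
  using two_le_s s_less_p by simp

lemma s_powr_alpha: "real s powr \<alpha> = real p"
  using two_le_s s_less_p by simp

lemma mult_pow_powr_alpha: "real (n * s ^ j) powr \<alpha> = real n powr \<alpha> * real p ^ j"
proof (induction j)
  case (Suc j)
  have "real (n * s ^ Suc j) powr \<alpha> = real (n * s ^ j) powr \<alpha> * real s powr \<alpha>"
    by (simp add: powr_mult ac_simps)
  then show ?case using Suc s_powr_alpha by simp
qed simp

lemma aseq_le_powr: "1 \<le> n \<Longrightarrow> real (a n) + 1 \<le> real p * real n powr \<alpha>"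
proof (induction n rule: less_induct)
  case (less n)
  define q j where "q = n div s" and "j = n mod s"
  have n: "n = s * q + j" and j: "j < s"
    using two_le_s by (simp_all add: q_def j_def)
  have "a n + 1 \<le> p * (a q + 1)"
    using aseq_mult_add_le[OF j, of q] h_less_p[OF j] n by simp
  then have "real (a n) + 1 \<le> real p * (real (a q) + 1)"
    by (metis of_nat_1 of_nat_add of_nat_le_iff of_nat_mult)
  also have "\<dots> \<le> real p * real n powr \<alpha>"
  proof (cases "q = 0")
    case True
    have "1 \<le> real n powr \<alpha>" using less.prems alpha_pos by (simp add: ge_one_powr_ge_zero)
    with True show ?thesis using mult_left_mono[of 1 "real n powr \<alpha>" "real p"] by simp
  next
    case False
    have "q < n" using less.prems two_le_s by (simp add: q_def)
    with False less.IH have "real (a q) + 1 \<le> real p * real q powr \<alpha>" by simp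
    also have "\<dots> = real (q * s) powr \<alpha>" using mult_pow_powr_alpha[of q 1] by simp
    also have "\<dots> \<le> real n powr \<alpha>" using n alpha_pos by (intro powr_mono2) auto
    finally show ?thesis by (intro mult_left_mono) simp_all
  qed
  finally show ?case .
qed

lemma bseq_nonneg: "0 \<le> b n"
  by (simp add: bseq_def)

lemma bseq_le: "b n \<le> real p"
proof (cases "n = 0")
  case False
  then have "real (a n) \<le> real p * real n powr \<alpha>" using aseq_le_powr[of n] by simp
  with False show ?thesis by (simp add: bseq_def divide_le_eq)
qed (simp add: bseq_def)

lemma bseq_le_bseq_mult_pow:
  assumes "1 \<le> n"
  shows "b n \<le> b (n * s ^ j)"
proof -
  have "real p ^ j * real (a n) \<le> real (a (n * s ^ j))"
    using aseq_mult_pow_ge[of j n] by (metis of_nat_le_iff of_nat_mult of_nat_power)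
  then have "real p ^ j * real (a n) / (real n powr \<alpha> * real p ^ j) \<le> b (n * s ^ j)"
    unfolding bseq_def mult_pow_powr_alpha by (intro divide_right_mono) simp_all
  with assms s_less_p show ?thesis by (simp add: bseq_def)
qed

lemma bseq_mult_ratio_le_Suc: "b n * (real n / (real n + 1)) powr \<alpha> \<le> b (Suc n)"
proof -
  have "b n * (real n / (real n + 1)) powr \<alpha> = real (a n) / (real n + 1) powr \<alpha>"
    by (cases "n = 0") (simp_all add: bseq_def powr_divide)
  also have "\<dots> \<le> real (a (Suc n)) / (real n + 1) powr \<alpha>"
    using aseq_Suc_gt[of n] by (intro divide_right_mono) simp_all
  also have "\<dots> = b (Suc n)" by (simp add: bseq_def add.commute)
  finally show ?thesis .
qed

lemma eventually_bseq_jump_less: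
  assumes "0 < \<epsilon>"
  shows "\<forall>\<^sub>F n in sequentially. b n - b (Suc n) < \<epsilon>"
proof -
  define r where "r n = (real n / (real n + 1)) powr \<alpha>" for n
  have "r \<longlonglongrightarrow> 1 powr \<alpha>"
    unfolding r_def using tendsto_powr[OF LIMSEQ_n_over_Suc_n tendsto_const] by (simp add: add.commute)
  moreover have "1 - \<epsilon> / real p < 1 powr \<alpha>" using assms s_less_p by simp
  ultimately have "\<forall>\<^sub>F n in sequentially. 1 - \<epsilon> / real p < r n"
    by (rule order_tendstoD(1))
  then show ?thesis
  proof (rule eventually_mono)
    fix n assume r_n: "1 - \<epsilon> / real p < r n"
    have "r n \<le> 1" unfolding r_def using alpha_pos by (intro powr_le1) simp_all
    have "b n - b (Suc n) \<le> b n * (1 - r n)"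
      using bseq_mult_ratio_le_Suc[of n] unfolding r_def by (simp add: algebra_simps)
    also have "\<dots> \<le> real p * (1 - r n)"
      using bseq_le \<open>r n \<le> 1\<close> by (intro mult_right_mono) simp_all
    also have "\<dots> < \<epsilon>" using r_n s_less_p by (simp add: field_simps)
    finally show "b n - b (Suc n) < \<epsilon>" .
  qed
qed

lemma bseq_pred_mult_pow_le:
  assumes q: "1 \<le> q" and j: "1 \<le> j"
  defines "n \<equiv> q * s ^ j - 1"
  shows "b n \<le> b q * ((real n + 1) / real n) powr \<alpha>"
proof -
  have "s \<le> s ^ j" using j two_le_s by (simp add: self_le_power)
  then have "2 \<le> q * s ^ j" using q two_le_s by (metis le_trans mult_le_mono mult_1)
  then have "n + 1 = q * s ^ j" by (simp add: n_def)
  then have N: "real n + 1 = real (q * s ^ j)" by (metis of_nat_1 of_nat_add)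
  have "((real n + 1) / real n) powr \<alpha> = real q powr \<alpha> * real p ^ j / real n powr \<alpha>"
    unfolding N powr_divide mult_pow_powr_alpha ..
  with q have rhs: "b q * ((real n + 1) / real n) powr \<alpha> = real (p ^ j * a q) / real n powr \<alpha>"
    by (simp add: bseq_def)
  have "a n \<le> p ^ j * a q"
    using aseq_pred_mult_pow_less[OF q, of j] by (simp add: n_def)
  then have "real (a n) \<le> real (p ^ j * a q)" by (rule of_nat_mono)
  then show ?thesis
    unfolding rhs unfolding bseq_def by (intro divide_right_mono) simp_all
qed

lemma le_mult_pow_pred: "1 \<le> q \<Longrightarrow> j \<le> q * s ^ j - 1"
proof -
  assume "1 \<le> q"
  then have "s ^ j \<le> q * s ^ j" by simp
  moreover have "j < s ^ j" using less_pow_self[OF two_le_s] .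
  ultimately show ?thesis by linarith
qed

lemma bdd_above_bseq: "bdd_above (b ` {1..})"
  unfolding bdd_above_def using bseq_le by blast

lemma bdd_below_bseq: "bdd_below (b ` {1..})"
  unfolding bdd_below_def using bseq_nonneg by blast

lemma bseq_between_Inf_Sup: "1 \<le> n \<Longrightarrow> Inf (b ` {1..}) \<le> b n \<and> b n \<le> Sup (b ` {1..})"
  using cInf_lower[OF _ bdd_below_bseq] cSup_upper[OF _ bdd_above_bseq] by simp

lemma frequently_bseq_gt:
  assumes "y < Sup (b ` {1..})"
  shows "\<exists>\<^sub>F n in sequentially. y < b n"
proof -
  obtain n where n: "1 \<le> n" "y < b n"
    using assms less_cSup_iff[OF _ bdd_above_bseq] by auto
  have "\<forall>j. j \<le> n * s ^ j"
    using le_mult_pow_pred[OF n(1)] by (metis diff_le_self le_trans)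
  then have "filterlim (\<lambda>j. n * s ^ j) at_top sequentially"
    by (intro filterlim_at_top_mono[OF filterlim_ident] always_eventually)
  moreover have "\<forall>j. y < b (n * s ^ j)"
    using n(2) bseq_le_bseq_mult_pow[OF n(1)] by (metis less_le_trans)
  then have "\<forall>\<^sub>F j in sequentially. y < b (n * s ^ j)"
    by (rule always_eventually)
  ultimately show ?thesis by (rule frequently_of_filterlim)
qed

lemma frequently_bseq_lt:
  assumes "Inf (b ` {1..}) < y"
  shows "\<exists>\<^sub>F n in sequentially. b n < y"
proof -
  obtain q where q: "1 \<le> q" "b q < y"
    using assms cInf_less_iff[OF _ bdd_below_bseq] by auto
  let ?n = "\<lambda>j. q * s ^ j - 1"
  have lim_n: "filterlim ?n at_top sequentially"
    by (rule filterlim_at_top_mono[OF filterlim_ident]) (use le_mult_pow_pred[OF q(1)] in auto)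
  have "(\<lambda>n. b q * ((real n + 1) / real n) powr \<alpha>) \<longlonglongrightarrow> b q * 1 powr \<alpha>"
    using tendsto_powr[OF LIMSEQ_Suc_n_over_n tendsto_const]
    by (intro tendsto_mult tendsto_const) (simp add: add.commute)
  then have "\<forall>\<^sub>F n in sequentially. b q * ((real n + 1) / real n) powr \<alpha> < y"
    using q(2) by (intro order_tendstoD(2)) simp_all
  then have "\<forall>\<^sub>F j in sequentially. b q * ((real (?n j) + 1) / real (?n j)) powr \<alpha> < y"
    using lim_n by (rule eventually_compose_filterlim)
  then have "\<forall>\<^sub>F j in sequentially. b (?n j) < y"
    using eventually_ge_at_top[of 1]
    by eventually_elim (use bseq_pred_mult_pow_le[OF q(1)] in \<open>auto intro: le_less_trans\<close>)
  with lim_n show ?thesis by (rule frequently_of_filterlim)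
qed

lemma frequently_bseq_near:
  assumes "Inf (b ` {1..}) \<le> y" and "y \<le> Sup (b ` {1..})" and "0 < \<epsilon>"
  shows "\<exists>\<^sub>F n in sequentially. dist (b n) y < \<epsilon>"
proof (cases "Inf (b ` {1..}) < Sup (b ` {1..})")
  case True
  have "y \<in> closure {Inf (b ` {1..})<..<Sup (b ` {1..})}"
    using True assms(1,2) by simp
  then show ?thesis
  proof (rule frequently_dist_less_closure[rotated])
    fix z \<delta> :: real
    assume "z \<in> {Inf (b ` {1..})<..<Sup (b ` {1..})}" and "0 < \<delta>"
    then have z: "Inf (b ` {1..}) < z" "z < Sup (b ` {1..})" by simp_all
    have above: "\<exists>\<^sub>F n in sequentially. z \<le> b n"
      using frequently_bseq_gt[OF z(2)] by (rule frequently_elim1) simp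
    show "\<exists>\<^sub>F n in sequentially. dist (b n) z < \<delta>"
      by (rule frequently_dist_less_of_crossings[OF eventually_bseq_jump_less[OF \<open>0 < \<delta>\<close>]
            above frequently_bseq_lt[OF z(1)]])
  qed (rule assms(3))
next
  case False
  then have const: "b n = y" if "1 \<le> n" for n
    using assms(1,2) bseq_between_Inf_Sup[OF that] by linarith
  show ?thesis
    unfolding frequently_sequentially
  proof
    fix N
    have "dist (b (Suc N)) y < \<epsilon>" using const[of "Suc N"] assms(3) by simp
    then show "\<exists>n\<ge>N. dist (b n) y < \<epsilon>" using le_Suc_eq by blast
  qed
qed

end

theorem theorem2:
  fixes p s :: nat and A :: "nat set" and h :: "nat \<Rightarrow> nat"
  assumes "p \<ge> 3" and "2 \<le> s" and "s < p"
    and "A \<subseteq> {0..<p}" and "card A = s"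
    and "strict_mono_on {0..<s} h" and "bij_betw h {0..<s} A"
  defines "m \<equiv> Inf (bseq p s h ` {1..})" and "M \<equiv> Sup (bseq p s h ` {1..})"
  shows "(\<forall>x\<in>{m..M}. acc_point (bseq p s h) x) \<and> {x. acc_point (bseq p s h) x} = {m..M}"
proof -
  have "h j < p" if "j < s" for j
    using assms(4,7) that unfolding bij_betw_def by force
  then interpret digit_substitution p s h
    using assms(2,3,6) by unfold_locales
  have dense: "acc_point b x" if "x \<in> {m..M}" for x
    by (rule acc_pointI, rule frequently_bseq_near) (use that in \<open>simp_all add: m_def M_def\<close>)
  have "x \<in> {m..M}" if "acc_point b x" for x
    using acc_point_between[OF that bseq_between_Inf_Sup] unfolding m_def M_def by simp
  with dense show ?thesis by blast
qed

end
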